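(* Let $K\ge 1$ be an integer, $\mathcal{K}=\{0,\pm1,\dots,\pm K\}$, fix $i\in\mathcal{K}$, and let $L,h,d,\eta,P_t,\sigma^2,\gamma_0>0$. Fix a reference user location $(x_u^i,y_u^i,0)$ with $x_u^i\in[-L/2,L/2]$ and $y_u^i\in[id-d/2,\,id+d/2]$. Let $\{x_u^k\}_{k\in\mathcal{K}\setminus\{i\}}$ be independent random variables, each uniformly distributed on $[-L/2,L/2]$. Define $$\hat r_0=(id-y_u^i)^2+h^2,\qquad \hat r_k=(x_u^k-x_u^i)^2+(kd-y_u^i)^2+h^2\ \ (k\in\mathcal{K}\setminus\{i\}),$$ and the SINR $$\gamma_u^i=\frac{\hat r_0^{-1}}{\eta\sum_{k\in\mathcal{K}\setminus\{i\}}\hat r_k^{-1}+\frac{\sigma^2}{P_t}}.$$ Let $\mathcal{P}_s=\mathbb{P}(\gamma_u^i>\gamma_0)$ and $$A=\frac{\sigma^2}{\eta P_t}+\sum_{k\in\mathcal{K}\setminus\{i\}}\hat r_k^{-1}-\frac{\hat r_0^{-1}}{\eta\gamma_0}$$ (viewed as a function of the $2K$ variables $x_u^k$, $k\in\mathcal{K}\setminus\{i\}$). Then $$\mathcal{P}_s=\frac12-\frac1\pi\left(\frac1L\right)^{2K}\int_0^\infty \mathrm{Im}\left(\int_{-L/2}^{L/2}\!\!\cdots\int_{-L/2}^{L/2} e^{jtA}\prod_{k\in\mathcal{K}\setminus\{i\}}\mathrm{d}x_u^k\right)\frac{\mathrm{d}t}{t},$$ where the inner integral is a $2K$-fold integral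 over all $x_u^k$, $k\in\mathcal{K}\setminus\{i\}$, $j$ is the imaginary unit and $\mathrm{Im}$ denotes the imaginary part.
   Context: Setting (pinching-antenna system in a room): $2K+1$ waveguides lie on the ceiling at height $h$ along the lines $y=kd$, $z=h$, $k\in\mathcal{K}$, each of length $L$ (so $x\in[-L/2,L/2]$). Waveguide $k$ carries one pinching antenna placed directly above its served user $u_k$, i.e. at $(x_u^k,kd,h)$, where the users' $x$-coordinates are uniformly distributed along the room length independently of each other. The reference user $u_i$ is at $(x_u^i,y_u^i,0)$ and is served by the antenna at $(x_u^i,id,h)$; the other antennas act as interferers. $\eta$ is the reference path-loss constant, $P_t$ the per-antenna transmit power, $\sigma^2$ the noise variance, $\gamma_0$ the SINR threshold. The SINR used by the paper is exactly the expression $\gamma_u^i$ given in the claim, and $\mathcal{P}_s$ is called the successful transmission probability. *)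

theory Defs
  imports "HOL-Probability.Probability"
begin

definition interferers :: "int \<Rightarrow> int \<Rightarrow> int set" where
  "interferers K i = {-K..K} - {i}"

definition r0 :: "real \<Rightarrow> real \<Rightarrow> int \<Rightarrow> real \<Rightarrow> real" where
  "r0 h d i yu = (real_of_int i * d - yu)\<^sup>2 + h\<^sup>2"

definition rk :: "real \<Rightarrow> real \<Rightarrow> int \<Rightarrow> real \<Rightarrow> real \<Rightarrow> real \<Rightarrow> real" where
  "rk h d k xk xu yu = (xk - xu)\<^sup>2 + (real_of_int k * d - yu)\<^sup>2 + h\<^sup>2"

definition sinr ::
  "int \<Rightarrow> int \<Rightarrow> real \<Rightarrow> real \<Rightarrow> real \<Rightarrow> real \<Rightarrow> real \<Rightarrow> real \<Rightarrow> real \<Rightarrow> (int \<Rightarrow> real) \<Rightarrow> real" where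
  "sinr K i h d \<eta> Pt \<sigma>2 xu yu x =
     inverse (r0 h d i yu) /
       (\<eta> * (\<Sum>k\<in>interferers K i. inverse (rk h d k (x k) xu yu)) + \<sigma>2 / Pt)"

definition Afun ::
  "int \<Rightarrow> int \<Rightarrow> real \<Rightarrow> real \<Rightarrow> real \<Rightarrow> real \<Rightarrow> real \<Rightarrow> real \<Rightarrow> real \<Rightarrow> real \<Rightarrow> (int \<Rightarrow> real) \<Rightarrow> real" where
  "Afun K i h d \<eta> Pt \<sigma>2 \<gamma>0 xu yu x =
     \<sigma>2 / (\<eta> * Pt) + (\<Sum>k\<in>interferers K i. inverse (rk h d k (x k) xu yu))
     - inverse (r0 h d i yu) / (\<eta> * \<gamma>0)"

end

theory Submission
  imports Defs
begin

(* SINR > gamma0 holds exactly when A < 0, and the interferer abscissae form a random vector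
   uniformly distributed on the box [-L/2, L/2]^(2K), so P_s = P(A < 0) for A under the
   normalised uniform measure on the box.  For any integrable real random variable A without an
   atom at 0, Fubini and the Dirichlet integral give
     int_0^T Im E[exp(i t A)] / t dt = E[sgn A * Si (T |A|)],
   which tends to (pi/2) E[sgn A] = pi/2 - pi P(A < 0) by dominated convergence (Gil-Pelaez).
   The box integral in the statement is L^(2K) times the characteristic function.  A has no atom
   at 0 because, as a function of a single abscissa y with the others fixed, it has the form
   c + 1/((y - xu)^2 + b) with b > 0 and so vanishes at no more than two points. *)

lemma abs_sin_mult_div_le: "\<bar>sin (t * a) / t\<bar> \<le> \<bar>a\<bar>" for t a :: real
proof (cases "t = 0")
  case False
  have "\<bar>sin (t * a)\<bar> \<le> \<bar>t\<bar> * \<bar>a\<bar>"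
    using abs_sin_x_le_abs_x[of "t * a"] by (simp add: abs_mult)
  with False show ?thesis by (simp add: abs_div divide_le_eq mult.commute)
qed simp

lemma (in prob_space) expectation_sgn:
  assumes [measurable]: "f \<in> borel_measurable M" and nonzero: "AE x in M. f x \<noteq> 0"
  shows "expectation (\<lambda>x. sgn (f x)) = 1 - 2 * prob {x \<in> space M. f x < 0}"
proof -
  let ?neg = "{x \<in> space M. f x < 0}"
  have "expectation (\<lambda>x. sgn (f x)) = expectation (\<lambda>x. 1 - 2 * indicator ?neg x)"
    using nonzero by (intro integral_cong_AE) (auto simp: sgn_real_def split: split_indicator)
  also have "\<dots> = 1 - 2 * prob ?neg"
    by (subst Bochner_Integration.integral_diff)
       (auto simp: prob_space less_top[symmetric] intro!: integrable_real_indicator)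
  finally show ?thesis .
qed

lemma borel_measurable_cis[measurable]: "cis \<in> borel_measurable borel"
  by (intro borel_measurable_continuous_onI continuous_intros)

lemma (in prob_space) integrable_cis_mult:
  assumes [measurable]: "f \<in> borel_measurable M"
  shows "integrable M (\<lambda>x. cis (t * f x))"
  by (rule integrable_const_bound[where B = 1]) auto

lemma (in prob_space) integrable_indicator_sin_mult_div:
  fixes f :: "'a \<Rightarrow> real"
  assumes f: "integrable M f"
  shows "integrable (lborel \<Otimes>\<^sub>M M) (\<lambda>(t, x). indicator {0<..<T} t * (sin (t * f x) / t))"
proof -
  interpret P: pair_sigma_finite lborel M ..
  have [measurable]: "f \<in> borel_measurable M" using f by simp
  have dominating: "integrable (lborel \<Otimes>\<^sub>M M) (\<lambda>(t, x). indicator {0<..<T} t * \<bar>f x\<bar>)"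
    by (rule P.Fubini_integrable)
       (auto simp: abs_mult intro!: f integrable_mult_left integrable_real_indicator emeasure_bounded_finite)
  show ?thesis
  proof (rule Bochner_Integration.integrable_bound[OF dominating])
    show "AE z in lborel \<Otimes>\<^sub>M M. norm ((\<lambda>(t, x). indicator {0<..<T} t * (sin (t * f x) / t)) z)
            \<le> norm ((\<lambda>(t, x). indicator {0<..<T} t * \<bar>f x\<bar>) z)"
      using abs_sin_mult_div_le
      by (intro AE_I2) (auto simp: abs_mult simp del: abs_divide split: split_indicator)
  qed measurable
qed

lemma (in prob_space) integral_Im_char_div_eq_Si:
  assumes f: "integrable M f" and "T \<ge> 0"
  shows "integral {0..T} (\<lambda>t. Im (\<integral>x. cis (t * f x) \<partial>M) / t)
           = expectation (\<lambda>x. sgn (f x) * Si (T * \<bar>f x\<bar>))"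
proof -
  interpret P: pair_sigma_finite lborel M ..
  have [measurable]: "f \<in> borel_measurable M" using f by simp
  define F where "F t x = indicator {0<..<T} t * (sin (t * f x) / t)" for t x
  have Fint: "integrable (lborel \<Otimes>\<^sub>M M) (case_prod F)"
    unfolding F_def using integrable_indicator_sin_mult_div[OF f] by simp
  have inner: "(\<integral>x. F t x \<partial>M) = indicator {0<..<T} t * (Im (\<integral>x. cis (t * f x) \<partial>M) / t)" for t
    using integral_Im[OF integrable_cis_mult, of f t] by (simp add: F_def)
  have "set_integrable lborel {0<..<T} (\<lambda>t. Im (\<integral>x. cis (t * f x) \<partial>M) / t)"
    using P.integrable_fst[OF Fint] by (simp add: set_integrable_def inner)
  then have "integral {0..T} (\<lambda>t. Im (\<integral>x. cis (t * f x) \<partial>M) / t)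
        = (LINT t : {0<..<T} | lborel. Im (\<integral>x. cis (t * f x) \<partial>M) / t)"
    by (simp add: integral_open_interval_real set_borel_integral_eq_integral(2))
  also have "\<dots> = (\<integral>t. \<integral>x. F t x \<partial>M \<partial>lborel)"
    by (simp add: inner set_lebesgue_integral_def)
  also have "\<dots> = (\<integral>x. \<integral>t. F t x \<partial>lborel \<partial>M)"
    using P.Fubini_integral[OF Fint] by simp
  also have "\<dots> = expectation (\<lambda>x. sgn (f x) * Si (T * \<bar>f x\<bar>))"
  proof (rule Bochner_Integration.integral_cong[OF refl])
    fix x
    have "(\<integral>t. F t x \<partial>lborel) = (LBINT t=ereal 0..ereal T. sin (t * f x) / t)"
      using \<open>T \<ge> 0\<close> by (simp add: F_def interval_lebesgue_integral_def set_lebesgue_integral_def)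
    then show "(\<integral>t. F t x \<partial>lborel) = sgn (f x) * Si (T * \<bar>f x\<bar>)"
      using LBINT_I0c_sin_scale_divide[OF \<open>T \<ge> 0\<close>] by (simp add: zero_ereal_def)
  qed
  finally show ?thesis .
qed

theorem (in prob_space) gil_pelaez:
  assumes f: "integrable M f" and nonzero: "AE x in M. f x \<noteq> 0"
  shows "((\<lambda>T. integral {0..T} (\<lambda>t. Im (\<integral>x. cis (t * f x) \<partial>M) / t))
           \<longlongrightarrow> pi / 2 - pi * prob {x \<in> space M. f x < 0}) at_top"
proof -
  have [measurable]: "f \<in> borel_measurable M" using f by simp
  obtain B where B: "\<And>T. \<bar>Si T\<bar> \<le> B" using bounded_Si by auto
  have "((\<lambda>T. expectation (\<lambda>x. sgn (f x) * Si (T * \<bar>f x\<bar>)))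
          \<longlongrightarrow> expectation (\<lambda>x. sgn (f x) * (pi / 2))) at_top"
  proof (rule integral_dominated_convergence_at_top[where w = "\<lambda>_. B"])
    show "\<forall>\<^sub>F T in at_top. AE x in M. norm (sgn (f x) * Si (T * \<bar>f x\<bar>)) \<le> B"
      using B order_trans[OF abs_ge_zero B[of 0]]
      by (intro always_eventually allI AE_I2) (auto simp: abs_mult abs_sgn_eq)
    show "AE x in M. ((\<lambda>T. sgn (f x) * Si (T * \<bar>f x\<bar>)) \<longlongrightarrow> sgn (f x) * (pi / 2)) at_top"
      using nonzero
    proof eventually_elim
      case (elim x)
      then have "filterlim (\<lambda>T. T * \<bar>f x\<bar>) at_top at_top"
        by (intro filterlim_at_top_mult_tendsto_pos[OF tendsto_const] filterlim_ident) auto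
      then show ?case
        by (intro tendsto_mult tendsto_const filterlim_compose[OF Si_at_top])
    qed
  qed auto
  also have "expectation (\<lambda>x. sgn (f x) * (pi / 2)) = pi / 2 - pi * prob {x \<in> space M. f x < 0}"
    by (simp add: expectation_sgn[OF _ nonzero] field_simps)
  finally show ?thesis
    by (rule Lim_transform_eventually)
       (auto intro: eventually_mono[OF eventually_ge_at_top[of 0]] integral_Im_char_div_eq_Si[OF f, symmetric])
qed

lemma set_integral_eq_measure_scaleR_uniform:
  fixes f :: "'a \<Rightarrow> 'b::{banach, second_countable_topology}"
  assumes B: "B \<in> sets M" "emeasure M B \<noteq> 0" "emeasure M B \<noteq> \<infinity>"
    and f: "f \<in> borel_measurable M"
  shows "set_lebesgue_integral M B f = measure M B *\<^sub>R (\<integral>x. f x \<partial>uniform_measure M B)"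
proof -
  have pos: "measure M B > 0"
    using B by (simp add: emeasure_eq_ennreal_measure zero_less_measure_iff)
  have "uniform_measure M B = density M (\<lambda>x. ennreal (indicator B x / measure M B))"
    unfolding uniform_measure_def
  proof (intro arg_cong[where f = "density M"] ext)
    fix x
    show "indicator B x / emeasure M B = ennreal (indicator B x / measure M B)"
      using B divide_ennreal[OF zero_le_one pos]
      by (cases "x \<in> B") (auto simp: emeasure_eq_ennreal_measure)
  qed
  then have "(\<integral>x. f x \<partial>uniform_measure M B) = (\<integral>x. (indicator B x / measure M B) *\<^sub>R f x \<partial>M)"
    using B f by (simp add: integral_density)
  also have "\<dots> = (\<integral>x. (1 / measure M B) *\<^sub>R (indicator B x *\<^sub>R f x) \<partial>M)"
    by (simp add: scaleR_scaleR)
  also have "\<dots> = (1 / measure M B) *\<^sub>R set_lebesgue_integral M B f"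
    unfolding set_lebesgue_integral_def by (rule integral_scaleR_right)
  finally show ?thesis using pos by simp
qed

lemma gil_pelaez_uniform_measure:
  assumes B: "B \<in> sets M" "emeasure M B = ennreal V" "V > 0"
    and f: "integrable (uniform_measure M B) f"
    and nonzero: "AE x in M. x \<in> B \<longrightarrow> f x \<noteq> 0"
  shows "((\<lambda>T. integral {0..T} (\<lambda>t. Im (set_lebesgue_integral M B (\<lambda>x. cis (t * f x))) / t))
           \<longlongrightarrow> V * (pi / 2 - pi * measure (uniform_measure M B) {x \<in> space M. f x < 0})) at_top"
proof -
  let ?U = "uniform_measure M B"
  interpret U: prob_space ?U
    using B by (intro prob_space_uniform_measure) auto
  have [measurable]: "f \<in> borel_measurable M"
    using borel_measurable_integrable[OF f] by (simp cong: measurable_cong_sets)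
  have "set_lebesgue_integral M B (\<lambda>x. cis (t * f x)) = V *\<^sub>R (\<integral>x. cis (t * f x) \<partial>?U)" for t
    using B by (subst set_integral_eq_measure_scaleR_uniform) (auto simp: measure_def)
  then have "(\<lambda>T. integral {0..T} (\<lambda>t. Im (set_lebesgue_integral M B (\<lambda>x. cis (t * f x))) / t))
      = (\<lambda>T. V * integral {0..T} (\<lambda>t. Im (\<integral>x. cis (t * f x) \<partial>?U) / t))"
    by (simp add: times_divide_eq_right[symmetric] del: times_divide_eq_right)
  moreover have "AE x in ?U. f x \<noteq> 0"
    using B nonzero by (intro AE_uniform_measureI) auto
  ultimately show ?thesis
    using tendsto_mult_left[OF U.gil_pelaez[OF f], of V] by simp
qed

lemma (in sigma_finite_measure) PiM_uniform_measure:
  fixes I :: "'i set"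
  assumes I: "finite I"
    and S: "S \<in> sets M" "emeasure M S \<noteq> 0" "emeasure M S \<noteq> \<infinity>"
  shows "PiM I (\<lambda>_. uniform_measure M S) = uniform_measure (PiM I (\<lambda>_. M)) (PiE I (\<lambda>_. S))"
proof -
  define L where "L = measure M S"
  have SL: "emeasure M S = ennreal L" and L: "L > 0"
    using S by (auto simp: L_def emeasure_eq_ennreal_measure zero_less_measure_iff)
  interpret product_sigma_finite "\<lambda>_::'i. M" ..
  interpret U: prob_space "uniform_measure M S"
    using S by (intro prob_space_uniform_measure) auto
  interpret U: product_sigma_finite "\<lambda>_::'i. uniform_measure M S" ..
  have box: "PiE I (\<lambda>_. S) \<in> sets (PiM I (\<lambda>_. M))"
    using I S by (intro sets_PiM_I_finite) auto
  show ?thesis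
  proof (rule U.PiM_eqI[symmetric, OF I])
    show "sets (uniform_measure (PiM I (\<lambda>_. M)) (PiE I (\<lambda>_. S))) = sets (PiM I (\<lambda>_. uniform_measure M S))"
      by (simp cong: sets_PiM_cong)
    fix A assume "\<And>j. j \<in> I \<Longrightarrow> A j \<in> sets (uniform_measure M S)"
    then have A: "\<And>j. j \<in> I \<Longrightarrow> A j \<in> sets M" by simp
    define m where "m j = measure M (S \<inter> A j)" for j
    have m: "emeasure M (S \<inter> A j) = ennreal (m j)" "0 \<le> m j" if "j \<in> I" for j
    proof -
      have "emeasure M (S \<inter> A j) \<le> emeasure M S"
        using A[OF that] S by (intro emeasure_mono) auto
      then have "emeasure M (S \<inter> A j) \<noteq> \<infinity>"
        using S(3) by (metis neq_top_trans infinity_ennreal_def)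
      then show "emeasure M (S \<inter> A j) = ennreal (m j)"
        by (simp add: m_def emeasure_eq_ennreal_measure)
    qed (simp add: m_def)
    have "emeasure (uniform_measure (PiM I (\<lambda>_. M)) (PiE I (\<lambda>_. S))) (PiE I A)
        = emeasure (PiM I (\<lambda>_. M)) (PiE I (\<lambda>j. S \<inter> A j)) / emeasure (PiM I (\<lambda>_. M)) (PiE I (\<lambda>_. S))"
      using I A box by (simp add: sets_PiM_I_finite PiE_Int)
    also have "\<dots> = (\<Prod>j\<in>I. ennreal (m j)) / (\<Prod>j\<in>I. ennreal L)"
      using I A S m by (simp add: emeasure_PiM SL)
    also have "\<dots> = ennreal ((\<Prod>j\<in>I. m j) / L ^ card I)"
      using L m by (simp add: prod_ennreal ennreal_power divide_ennreal prod_nonneg)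
    also have "\<dots> = (\<Prod>j\<in>I. emeasure (uniform_measure M S) (A j))"
      using A L m S by (simp add: prod_ennreal prod_dividef SL divide_ennreal)
    finally show "emeasure (uniform_measure (PiM I (\<lambda>_. M)) (PiE I (\<lambda>_. S))) (PiE I A)
        = (\<Prod>j\<in>I. emeasure (uniform_measure M S) (A j))" .
  qed
qed

lemma (in product_sigma_finite) PiM_null_if_sections_null:
  fixes I :: "'i set"
  assumes I: "finite I" "k \<in> I" and Z[measurable]: "Z \<in> sets (PiM I M)"
    and sections: "\<And>x. {y \<in> space (M k). x(k := y) \<in> Z} \<in> null_sets (M k)"
  shows "Z \<in> null_sets (PiM I M)"
proof -
  define J where "J = I - {k}"
  have IJ: "I = insert k J" "k \<notin> J" "finite J"
    using I by (auto simp: J_def)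
  have section_integral: "(\<integral>\<^sup>+ y. indicator Z (x(k := y)) \<partial>M k) = 0" for x
  proof -
    have "(\<integral>\<^sup>+ y. indicator Z (x(k := y)) \<partial>M k)
        = (\<integral>\<^sup>+ y. indicator {y \<in> space (M k). x(k := y) \<in> Z} y \<partial>M k)"
      by (intro nn_integral_cong) (simp split: split_indicator)
    also have "\<dots> = 0"
      using sections[of x] by (simp add: null_sets_def)
    finally show ?thesis .
  qed
  have "emeasure (PiM I M) Z = (\<integral>\<^sup>+ x. indicator Z x \<partial>PiM (insert k J) M)"
    by (simp add: IJ(1)[symmetric])
  also have "\<dots> = (\<integral>\<^sup>+ x. \<integral>\<^sup>+ y. indicator Z (x(k := y)) \<partial>M k \<partial>PiM J M)"
    using IJ Z by (intro product_nn_integral_insert) auto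
  also have "\<dots> = 0"
    by (simp add: section_integral)
  finally show ?thesis using Z by (simp add: null_sets_def)
qed

lemma (in prob_space) distr_indep_identically_distributed_eq_PiM:
  assumes I: "I \<noteq> {}" and indep: "indep_vars (\<lambda>_. borel) X I"
    and distr_X: "\<And>k. k \<in> I \<Longrightarrow> distr M lborel (X k) = D"
  shows "distr M (PiM I (\<lambda>_. lborel)) (\<lambda>\<omega>. \<lambda>k\<in>I. X k \<omega>) = PiM I (\<lambda>_. D)"
proof -
  have rv: "\<And>k. k \<in> I \<Longrightarrow> random_variable borel (X k)"
    using indep by (simp add: indep_vars_def)
  have "distr M (PiM I (\<lambda>_. lborel)) (\<lambda>\<omega>. \<lambda>k\<in>I. X k \<omega>)
      = distr M (PiM I (\<lambda>_. borel)) (\<lambda>\<omega>. \<lambda>k\<in>I. X k \<omega>)"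
    by (intro distr_cong sets_PiM_cong) auto
  also have "\<dots> = PiM I (\<lambda>k. distr M borel (X k))"
    using indep_vars_iff_distr_eq_PiM'[OF I rv] indep by simp
  also have "\<dots> = PiM I (\<lambda>_. D)"
  proof (rule PiM_cong[OF refl])
    fix k assume "k \<in> I"
    then show "distr M borel (X k) = D"
      using distr_X[of k] by (metis distr_cong sets_lborel)
  qed
  finally show ?thesis .
qed

lemma emeasure_PiM_lborel_box:
  assumes "finite I" "a \<le> b"
  shows "emeasure (PiM I (\<lambda>_. lborel)) (PiE I (\<lambda>_. {a..b})) = ennreal ((b - a) ^ card I)"
proof -
  interpret product_sigma_finite "\<lambda>_::'i. lborel :: real measure" ..
  show ?thesis
    using assms by (simp add: emeasure_PiM ennreal_power)
qed

lemma (in prob_space) prob_indep_uniform_vector_in: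
  assumes I: "finite I" "I \<noteq> {}" and indep: "indep_vars (\<lambda>_. borel) X I"
    and S: "S \<in> sets lborel" "emeasure lborel S \<noteq> 0" "emeasure lborel S \<noteq> \<infinity>"
    and distr_X: "\<And>k. k \<in> I \<Longrightarrow> distr M lborel (X k) = uniform_measure lborel S"
    and E: "E \<in> sets (PiM I (\<lambda>_. lborel))"
  shows "prob {\<omega> \<in> space M. (\<lambda>k\<in>I. X k \<omega>) \<in> E}
           = measure (uniform_measure (PiM I (\<lambda>_. lborel)) (PiE I (\<lambda>_. S))) E"
proof -
  have "random_variable (PiM I (\<lambda>_. lborel)) (\<lambda>\<omega>. \<lambda>k\<in>I. X k \<omega>)"
    using indep by (intro measurable_restrict) (simp add: indep_vars_def)
  moreover have "uniform_measure (PiM I (\<lambda>_. lborel)) (PiE I (\<lambda>_. S))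
      = distr M (PiM I (\<lambda>_. lborel)) (\<lambda>\<omega>. \<lambda>k\<in>I. X k \<omega>)"
    by (simp add: lborel.PiM_uniform_measure[OF I(1) S, symmetric]
        distr_indep_identically_distributed_eq_PiM[OF I(2) indep distr_X])
  ultimately show ?thesis
    using E by (simp add: measure_distr vimage_def Int_def conj_commute)
qed

lemma finite_interferers: "finite (interferers K i)"
  by (simp add: interferers_def)

lemma card_interferers:
  assumes "K \<ge> 0" "i \<in> {-K..K}"
  shows "card (interferers K i) = 2 * nat K"
  using assms unfolding interferers_def by (subst card_Diff_singleton) (auto simp: nat_add_distrib)

lemma r0_pos: "h > 0 \<Longrightarrow> 0 < r0 h d i yu"
  unfolding r0_def by (simp add: add_nonneg_pos)

lemma sum_inverse_rk_nonneg: "h > 0 \<Longrightarrow> 0 \<le> (\<Sum>k\<in>J. inverse (rk h d k (x k) xu yu))"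
  unfolding rk_def by (intro sum_nonneg) (simp add: add_nonneg_pos less_imp_le)

lemma inverse_rk_le: "h > 0 \<Longrightarrow> inverse (rk h d k y xu yu) \<le> inverse (h\<^sup>2)"
  unfolding rk_def by (intro le_imp_inverse_le) auto

lemma sinr_gt_iff_Afun_neg:
  assumes "h > 0" "\<eta> > 0" "Pt > 0" "\<sigma>2 > 0" "\<gamma>0 > 0"
  shows "sinr K i h d \<eta> Pt \<sigma>2 xu yu x > \<gamma>0 \<longleftrightarrow> Afun K i h d \<eta> Pt \<sigma>2 \<gamma>0 xu yu x < 0"
proof -
  define s where "s = (\<Sum>k\<in>interferers K i. inverse (rk h d k (x k) xu yu))"
  define r where "r = inverse (r0 h d i yu)"
  have "s \<ge> 0"
    unfolding s_def using sum_inverse_rk_nonneg[OF \<open>h > 0\<close>] .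
  then have D: "\<eta> * s + \<sigma>2 / Pt > 0"
    using assms by (simp add: add_nonneg_pos)
  have "sinr K i h d \<eta> Pt \<sigma>2 xu yu x > \<gamma>0 \<longleftrightarrow> \<gamma>0 * (\<eta> * s + \<sigma>2 / Pt) < r"
    using D by (simp add: sinr_def s_def r_def pos_less_divide_eq)
  also have "\<dots> \<longleftrightarrow> (\<sigma>2 / (\<eta> * Pt) + s - r / (\<eta> * \<gamma>0)) * (\<eta> * \<gamma>0) < 0"
  proof -
    have "(\<sigma>2 / (\<eta> * Pt) + s - r / (\<eta> * \<gamma>0)) * (\<eta> * \<gamma>0) = \<gamma>0 * (\<eta> * s + \<sigma>2 / Pt) - r"
      using assms by (simp add: field_simps)
    then show ?thesis by simp
  qed
  also have "\<dots> \<longleftrightarrow> Afun K i h d \<eta> Pt \<sigma>2 \<gamma>0 xu yu x < 0"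
    using assms by (simp add: Afun_def s_def r_def mult_less_0_iff)
  finally show ?thesis .
qed

lemma Afun_restrict:
  "Afun K i h d \<eta> Pt \<sigma>2 \<gamma>0 xu yu (restrict x (interferers K i)) = Afun K i h d \<eta> Pt \<sigma>2 \<gamma>0 xu yu x"
  unfolding Afun_def by (intro arg_cong2[where f = "(-)"] arg_cong2[where f = "(+)"] refl sum.cong) auto

lemma Afun_measurable:
  "Afun K i h d \<eta> Pt \<sigma>2 \<gamma>0 xu yu \<in> borel_measurable (PiM (interferers K i) (\<lambda>_. lborel))"
  unfolding Afun_def rk_def by measurable

lemma abs_Afun_le:
  assumes "h > 0" "\<eta> > 0" "Pt > 0" "\<sigma>2 > 0" "\<gamma>0 > 0"
  shows "\<bar>Afun K i h d \<eta> Pt \<sigma>2 \<gamma>0 xu yu x\<bar>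
           \<le> \<sigma>2 / (\<eta> * Pt) + card (interferers K i) / h\<^sup>2 + inverse (r0 h d i yu) / (\<eta> * \<gamma>0)"
proof -
  define s where "s = (\<Sum>k\<in>interferers K i. inverse (rk h d k (x k) xu yu))"
  have "0 \<le> s"
    unfolding s_def using sum_inverse_rk_nonneg[OF \<open>h > 0\<close>] .
  moreover have "s \<le> card (interferers K i) / h\<^sup>2"
    using sum_bounded_above[of "interferers K i" "\<lambda>k. inverse (rk h d k (x k) xu yu)" "inverse (h\<^sup>2)"]
      inverse_rk_le[OF \<open>h > 0\<close>]
    by (simp add: s_def field_simps)
  moreover have "0 \<le> \<sigma>2 / (\<eta> * Pt)" "0 \<le> inverse (r0 h d i yu) / (\<eta> * \<gamma>0)"
    using assms r0_pos[OF \<open>h > 0\<close>, of d i yu] by simp_all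
  ultimately show ?thesis
    unfolding Afun_def s_def[symmetric] by (simp add: abs_le_iff)
qed

lemma Afun_fun_upd:
  assumes "k \<in> interferers K i"
  shows "Afun K i h d \<eta> Pt \<sigma>2 \<gamma>0 xu yu (x(k := y))
           = Afun K i h d \<eta> Pt \<sigma>2 \<gamma>0 xu yu x - inverse (rk h d k (x k) xu yu) + inverse (rk h d k y xu yu)"
proof -
  have "(\<Sum>j\<in>interferers K i. inverse (rk h d j ((x(k := y)) j) xu yu))
      = (\<Sum>j\<in>interferers K i. inverse (rk h d j (x j) xu yu)) - inverse (rk h d k (x k) xu yu)
          + inverse (rk h d k y xu yu)"
    using assms finite_interferers
    by (simp add: sum.remove[of _ k] sum.cong[of _ _ "\<lambda>j. inverse (rk h d j ((x(k := y)) j) xu yu)"])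
  then show ?thesis by (simp add: Afun_def)
qed

lemma finite_zeros_add_inverse_square:
  fixes a b c :: real
  assumes "b > 0"
  shows "finite {y. c + inverse ((y - a)\<^sup>2 + b) = 0}"
proof (rule finite_subset)
  define q where "q = - inverse c - b"
  show "{y. c + inverse ((y - a)\<^sup>2 + b) = 0} \<subseteq> {a + sqrt q, a - sqrt q}"
  proof
    fix y assume "y \<in> {y. c + inverse ((y - a)\<^sup>2 + b) = 0}"
    then have "inverse ((y - a)\<^sup>2 + b) = - c"
      by simp
    then have "(y - a)\<^sup>2 = q"
      unfolding q_def by (metis inverse_inverse_eq inverse_minus_eq add_diff_cancel_right')
    then have "\<bar>y - a\<bar> = sqrt q"
      by (metis real_sqrt_abs)
    then show "y \<in> {a + sqrt q, a - sqrt q}"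
      by (auto simp: abs_if split: if_splits)
  qed
qed simp

lemma Afun_zeros_null:
  assumes "K \<ge> 1" "i \<in> {-K..K}" "h > 0"
  shows "{x \<in> space (PiM (interferers K i) (\<lambda>_. lborel)). Afun K i h d \<eta> Pt \<sigma>2 \<gamma>0 xu yu x = 0}
           \<in> null_sets (PiM (interferers K i) (\<lambda>_. lborel))"
    (is "?Z \<in> null_sets ?Q")
proof -
  interpret product_sigma_finite "\<lambda>_::int. lborel :: real measure" ..
  obtain k where k: "k \<in> interferers K i"
    using card_interferers[of K i] assms by fastforce
  show ?thesis
  proof (rule PiM_null_if_sections_null[OF finite_interferers k])
    show "?Z \<in> sets ?Q"
      using Afun_measurable by measurable
    fix x :: "int \<Rightarrow> real"
    define c where "c = Afun K i h d \<eta> Pt \<sigma>2 \<gamma>0 xu yu x - inverse (rk h d k (x k) xu yu)"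
    have "{y \<in> space lborel. x(k := y) \<in> ?Z}
          \<subseteq> {y. c + inverse ((y - xu)\<^sup>2 + ((real_of_int k * d - yu)\<^sup>2 + h\<^sup>2)) = 0}"
    proof
      fix y assume "y \<in> {y \<in> space lborel. x(k := y) \<in> ?Z}"
      then have "Afun K i h d \<eta> Pt \<sigma>2 \<gamma>0 xu yu (x(k := y)) = 0"
        by simp
      then have "c + inverse (rk h d k y xu yu) = 0"
        by (simp only: Afun_fun_upd[OF k] c_def)
      then show "y \<in> {y. c + inverse ((y - xu)\<^sup>2 + ((real_of_int k * d - yu)\<^sup>2 + h\<^sup>2)) = 0}"
        by (simp only: rk_def add.assoc mem_Collect_eq)
    qed
    moreover have "finite {y. c + inverse ((y - xu)\<^sup>2 + ((real_of_int k * d - yu)\<^sup>2 + h\<^sup>2)) = 0}"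
      using \<open>h > 0\<close> by (intro finite_zeros_add_inverse_square) (simp add: add_nonneg_pos)
    ultimately show "{y \<in> space lborel. x(k := y) \<in> ?Z} \<in> null_sets lborel"
      by (intro finite_imp_null_set_lborel) (rule finite_subset)
  qed
qed

lemma tendsto_integral_Im_box_Afun:
  fixes K i :: int and L h d \<eta> Pt \<sigma>2 \<gamma>0 xu yu :: real
  assumes "K \<ge> 1" "i \<in> {-K..K}" "L > 0" "h > 0" "\<eta> > 0" "Pt > 0" "\<sigma>2 > 0" "\<gamma>0 > 0"
  defines "Q \<equiv> PiM (interferers K i) (\<lambda>_. lborel :: real measure)"
    and "B \<equiv> PiE (interferers K i) (\<lambda>_. {-L/2..L/2 :: real})"
    and "A \<equiv> Afun K i h d \<eta> Pt \<sigma>2 \<gamma>0 xu yu"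
  shows "((\<lambda>T. integral {0..T} (\<lambda>t. Im (set_lebesgue_integral Q B (\<lambda>x. cis (t * A x))) / t))
           \<longlongrightarrow> L ^ (2 * nat K) * (pi / 2 - pi * measure (uniform_measure Q B) {x \<in> space Q. A x < 0}))
         at_top"
proof (rule gil_pelaez_uniform_measure)
  show "B \<in> sets Q" "emeasure Q B = ennreal (L ^ (2 * nat K))"
    using assms(1-3) card_interferers[of K i]
    by (auto simp: Q_def B_def emeasure_PiM_lborel_box finite_interferers intro: sets_PiM_I_finite)
  then interpret U: prob_space "uniform_measure Q B"
    using \<open>L > 0\<close> by (intro prob_space_uniform_measure) auto
  show "integrable (uniform_measure Q B) A"
  proof (rule U.integrable_const_bound)
    show "AE x in uniform_measure Q B. norm (A x)
            \<le> \<sigma>2 / (\<eta> * Pt) + card (interferers K i) / h\<^sup>2 + inverse (r0 h d i yu) / (\<eta> * \<gamma>0)"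
      using abs_Afun_le[OF assms(4-8)] by (simp add: A_def)
    show "A \<in> borel_measurable (uniform_measure Q B)"
      using Afun_measurable by (simp add: A_def Q_def)
  qed
  show "AE x in Q. x \<in> B \<longrightarrow> A x \<noteq> 0"
    using Afun_zeros_null[OF assms(1,2,4), of d \<eta> Pt \<sigma>2 \<gamma>0 xu yu]
    unfolding Q_def A_def by (rule AE_I') auto
qed (use \<open>L > 0\<close> in simp)

lemma success_probability_eq_uniform:
  fixes K i :: int and L h d \<eta> Pt \<sigma>2 \<gamma>0 xu yu :: real
    and M :: "'a measure" and X :: "int \<Rightarrow> 'a \<Rightarrow> real"
  assumes "K \<ge> 1" "i \<in> {-K..K}" "L > 0" "h > 0" "\<eta> > 0" "Pt > 0" "\<sigma>2 > 0" "\<gamma>0 > 0"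
    and "prob_space M"
    and "prob_space.indep_vars M (\<lambda>_. borel) X (interferers K i)"
    and "\<And>k. k \<in> interferers K i \<Longrightarrow>
           distr M lborel (X k) = uniform_measure lborel {-L/2..L/2}"
  defines "Q \<equiv> PiM (interferers K i) (\<lambda>_. lborel :: real measure)"
    and "A \<equiv> Afun K i h d \<eta> Pt \<sigma>2 \<gamma>0 xu yu"
  shows "measure M {\<omega> \<in> space M. sinr K i h d \<eta> Pt \<sigma>2 xu yu (\<lambda>k. X k \<omega>) > \<gamma>0}
           = measure (uniform_measure Q (PiE (interferers K i) (\<lambda>_. {-L/2..L/2}))) {x \<in> space Q. A x < 0}"
proof -
  interpret M: prob_space M by fact
  have "{\<omega> \<in> space M. sinr K i h d \<eta> Pt \<sigma>2 xu yu (\<lambda>k. X k \<omega>) > \<gamma>0}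
      = {\<omega> \<in> space M. (\<lambda>k\<in>interferers K i. X k \<omega>) \<in> {x \<in> space Q. A x < 0}}"
    using sinr_gt_iff_Afun_neg[OF assms(4-8)]
    by (auto simp: A_def Q_def Afun_restrict space_PiM)
  also have "measure M \<dots> = measure (uniform_measure Q (PiE (interferers K i) (\<lambda>_. {-L/2..L/2})))
                                {x \<in> space Q. A x < 0}"
    unfolding Q_def
  proof (rule M.prob_indep_uniform_vector_in)
    show "{x \<in> space (PiM (interferers K i) (\<lambda>_. lborel)). A x < 0}
            \<in> sets (PiM (interferers K i) (\<lambda>_. lborel))"
      using Afun_measurable unfolding A_def by measurable
    show "interferers K i \<noteq> {}"
      using assms(1,2) card_interferers[of K i] by auto
  qed (use assms(3,10,11) in \<open>auto simp: finite_interferers\<close>)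
  finally show ?thesis .
qed

theorem theorem1:
  fixes K i :: int and L h d \<eta> Pt \<sigma>2 \<gamma>0 xu yu :: real
    and M :: "'a measure" and X :: "int \<Rightarrow> 'a \<Rightarrow> real"
  assumes "K \<ge> 1" and "i \<in> {-K..K}"
    and "L > 0" "h > 0" "d > 0" "\<eta> > 0" "Pt > 0" "\<sigma>2 > 0" "\<gamma>0 > 0"
    and "xu \<in> {-L/2..L/2}"
    and "yu \<in> {real_of_int i * d - d/2 .. real_of_int i * d + d/2}"
    and "prob_space M"
    and "prob_space.indep_vars M (\<lambda>_. borel) X (interferers K i)"
    and "\<And>k. k \<in> interferers K i \<Longrightarrow>
           distr M lborel (X k) = uniform_measure lborel {-L/2..L/2}"
  shows "\<exists>I. ((\<lambda>T. integral {0..T}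
                 (\<lambda>t. Im (set_lebesgue_integral (PiM (interferers K i) (\<lambda>_. lborel))
                          (PiE (interferers K i) (\<lambda>_. {-L/2..L/2}))
                          (\<lambda>x. cis (t * Afun K i h d \<eta> Pt \<sigma>2 \<gamma>0 xu yu x))) / t))
              \<longlongrightarrow> I) at_top
           \<and> measure M {\<omega> \<in> space M. sinr K i h d \<eta> Pt \<sigma>2 xu yu (\<lambda>k. X k \<omega>) > \<gamma>0}
               = 1/2 - (1/pi) * (1/L) ^ (2 * nat K) * I"
proof -
  let ?P = "measure (uniform_measure (PiM (interferers K i) (\<lambda>_. lborel)) (PiE (interferers K i) (\<lambda>_. {-L/2..L/2})))
              {x \<in> space (PiM (interferers K i) (\<lambda>_. lborel)). Afun K i h d \<eta> Pt \<sigma>2 \<gamma>0 xu yu x < 0}"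
  have "?P = 1/2 - (1/pi) * (1/L) ^ (2 * nat K) * (L ^ (2 * nat K) * (pi / 2 - pi * ?P))"
    using \<open>L > 0\<close> by (simp add: field_simps power_one_over)
  then show ?thesis
    using tendsto_integral_Im_box_Afun[OF assms(1-4,6-9), of d xu yu]
      success_probability_eq_uniform[OF assms(1-4,6-9,12-14)]
    by auto
qed

end
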